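(* Let $M$ and $M'$ be two stable matchings in an instance $I$ of SPA-S, and let $M^\lor$ be the assignment defined from $M,M'$ in the context. Then $M^\lor$ is a stable matching.
   Context: An instance $I$ of SPA-S consists of a finite set $\mathcal{S}$ of students, a finite set $\mathcal{P}$ of projects and a finite set $\mathcal{L}$ of lecturers. Each student $s_i$ ranks a subset $A_i\subseteq\mathcal{P}$ (its acceptable projects) in strict order. Each project is offered by exactly one lecturer; lecturer $l_k$ offers a nonempty set $P_k\subseteq\mathcal{P}$, the $P_k$ partitioning $\mathcal{P}$. Each lecturer $l_k$ ranks in strict order the students who find at least one project of $P_k$ acceptable. Projects have capacities $c_j\in\mathbb{Z}^+$, lecturers have capacities $d_k\in\mathbb{Z}^+$ with $\max\{c_j:p_j\in P_k\}\le d_k\le\sum\{c_j:p_j\in P_k\}$. A pair $(s_i,p_j)$, $p_j$ offered by $l_k$, is acceptable if $p_j\in A_i$ and $s_i$ is on $l_k$'s list. A matching $M$ is a set of acceptable pairs with each student in at most one pair, $|M(p_j)|\le c_j$, $|M(l_k)|\le d_k$, where for an assignment $M$ (a set of acceptable pairs), $M(s_i)$, $M(p_j)$, $M(l_k)$ denote the project of $s_i$, the students assigned to $p_j$, and the students assigned to projects of $l_k$. Undersubscribed/full means fewer than/exactly capacity many assigned students. An acceptable pair $(s_i,p_j)\notin M$ ($p_j$ offered by $l_k$) blocks $M$ if ($s_i$ is unassigned or prefers $p_j$ to $M(s_i)$) and one of: (P1) $p_j$ and $l_k$ undersubscribed; (P2) $p_j$ undersubscribed, $l_k$ full, $s_i\in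 M(l_k)$; (P3) $p_j$ undersubscribed, $l_k$ full, $l_k$ prefers $s_i$ to the worst student of $M(l_k)$; (P4) $p_j$ full and $l_k$ prefers $s_i$ to the worst student of $M(p_j)$. $M$ is stable if it is a matching with no blocking pair. Given stable matchings $M,M'$, $M^\lor$ is the assignment in which each student unassigned in both $M$ and $M'$ is unassigned, each student assigned to the same project in both is assigned to that project, and every other student is assigned to the worse (in her preference) of her projects in $M$ and $M'$. *)

theory Defs
  imports Main
begin

text \<open>Students of type 's, projects of type 'p, lecturers of type 'l.
  spref s : strict preference list of student s over her acceptable projects (earlier = better);
  lec p : the lecturer offering p; lpref l : strict preference list of lecturer l;
  cp p, cl l : project and lecturer capacities.\<close>

definition prefers :: "'a list \<Rightarrow> 'a \<Rightarrow> 'a \<Rightarrow> bool" where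
  "prefers xs a b \<longleftrightarrow> (\<exists>i j. i < j \<and> j < length xs \<and> xs ! i = a \<and> xs ! j = b)"

definition worst :: "'a list \<Rightarrow> 'a set \<Rightarrow> 'a" where
  "worst xs X = (THE w. w \<in> X \<and> (\<forall>t\<in>X. t \<noteq> w \<longrightarrow> prefers xs t w))"

definition spa_instance ::
  "'s set \<Rightarrow> 'p set \<Rightarrow> 'l set \<Rightarrow> ('s \<Rightarrow> 'p list) \<Rightarrow> ('p \<Rightarrow> 'l) \<Rightarrow> ('l \<Rightarrow> 's list)
   \<Rightarrow> ('p \<Rightarrow> nat) \<Rightarrow> ('l \<Rightarrow> nat) \<Rightarrow> bool" where
  "spa_instance S P L spref lec lpref cp cl \<longleftrightarrow>
     finite S \<and> finite P \<and> finite L \<and>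
     (\<forall>s\<in>S. distinct (spref s) \<and> set (spref s) \<subseteq> P) \<and>
     (\<forall>p\<in>P. lec p \<in> L) \<and>
     (\<forall>l\<in>L. {p\<in>P. lec p = l} \<noteq> {}) \<and>
     (\<forall>l\<in>L. distinct (lpref l) \<and>
        set (lpref l) = {s\<in>S. \<exists>p\<in>set (spref s). lec p = l}) \<and>
     (\<forall>p\<in>P. 0 < cp p) \<and>
     (\<forall>l\<in>L. 0 < cl l \<and> (\<forall>p\<in>P. lec p = l \<longrightarrow> cp p \<le> cl l) \<and>
        cl l \<le> sum cp {p\<in>P. lec p = l})"

definition acceptable ::
  "'s set \<Rightarrow> ('s \<Rightarrow> 'p list) \<Rightarrow> ('p \<Rightarrow> 'l) \<Rightarrow> ('l \<Rightarrow> 's list) \<Rightarrow> 's \<Rightarrow> 'p \<Rightarrow> bool" where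
  "acceptable S spref lec lpref s p \<longleftrightarrow>
     s \<in> S \<and> p \<in> set (spref s) \<and> s \<in> set (lpref (lec p))"

definition assigned_p :: "('s \<times> 'p) set \<Rightarrow> 'p \<Rightarrow> 's set" where
  "assigned_p M p = {s. (s, p) \<in> M}"

definition assigned_l :: "('p \<Rightarrow> 'l) \<Rightarrow> ('s \<times> 'p) set \<Rightarrow> 'l \<Rightarrow> 's set" where
  "assigned_l lec M l = {s. \<exists>p. (s, p) \<in> M \<and> lec p = l}"

definition matching ::
  "'s set \<Rightarrow> 'p set \<Rightarrow> 'l set \<Rightarrow> ('s \<Rightarrow> 'p list) \<Rightarrow> ('p \<Rightarrow> 'l) \<Rightarrow> ('l \<Rightarrow> 's list)
   \<Rightarrow> ('p \<Rightarrow> nat) \<Rightarrow> ('l \<Rightarrow> nat) \<Rightarrow> ('s \<times> 'p) set \<Rightarrow> bool" where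
  "matching S P L spref lec lpref cp cl M \<longleftrightarrow>
     (\<forall>(s, p)\<in>M. acceptable S spref lec lpref s p) \<and>
     (\<forall>s p q. (s, p) \<in> M \<longrightarrow> (s, q) \<in> M \<longrightarrow> p = q) \<and>
     (\<forall>p\<in>P. card (assigned_p M p) \<le> cp p) \<and>
     (\<forall>l\<in>L. card (assigned_l lec M l) \<le> cl l)"

definition blocking_pair ::
  "'s set \<Rightarrow> ('s \<Rightarrow> 'p list) \<Rightarrow> ('p \<Rightarrow> 'l) \<Rightarrow> ('l \<Rightarrow> 's list)
   \<Rightarrow> ('p \<Rightarrow> nat) \<Rightarrow> ('l \<Rightarrow> nat) \<Rightarrow> ('s \<times> 'p) set \<Rightarrow> 's \<Rightarrow> 'p \<Rightarrow> bool" where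
  "blocking_pair S spref lec lpref cp cl M s p \<longleftrightarrow>
     (let l = lec p; Mp = assigned_p M p; Ml = assigned_l lec M l in
     acceptable S spref lec lpref s p \<and> (s, p) \<notin> M \<and>
     ((\<forall>q. (s, q) \<notin> M) \<or> (\<exists>q. (s, q) \<in> M \<and> prefers (spref s) p q)) \<and>
     ((card Mp < cp p \<and> card Ml < cl l) \<or>
      (card Mp < cp p \<and> card Ml = cl l \<and> s \<in> Ml) \<or>
      (card Mp < cp p \<and> card Ml = cl l \<and> prefers (lpref l) s (worst (lpref l) Ml)) \<or>
      (card Mp = cp p \<and> prefers (lpref l) s (worst (lpref l) Mp))))"

definition stable ::
  "'s set \<Rightarrow> 'p set \<Rightarrow> 'l set \<Rightarrow> ('s \<Rightarrow> 'p list) \<Rightarrow> ('p \<Rightarrow> 'l) \<Rightarrow> ('l \<Rightarrow> 's list)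
   \<Rightarrow> ('p \<Rightarrow> nat) \<Rightarrow> ('l \<Rightarrow> nat) \<Rightarrow> ('s \<times> 'p) set \<Rightarrow> bool" where
  "stable S P L spref lec lpref cp cl M \<longleftrightarrow>
     matching S P L spref lec lpref cp cl M \<and>
     \<not> (\<exists>s p. blocking_pair S spref lec lpref cp cl M s p)"

text \<open>The assignment M-join: same project if equal in both; otherwise the worse of the two
  projects (for the student); a student assigned in only one of M, M' is left unassigned
  (this case does not arise for stable matchings).\<close>
definition join_worse :: "('s \<Rightarrow> 'p list) \<Rightarrow> ('s \<times> 'p) set \<Rightarrow> ('s \<times> 'p) set \<Rightarrow> ('s \<times> 'p) set" where
  "join_worse spref M M' = {(s, p).
     ((s, p) \<in> M \<and> (s, p) \<in> M') \<or>
     ((s, p) \<in> M \<and> (\<exists>q. (s, q) \<in> M' \<and> prefers (spref s) q p)) \<or>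
     ((s, p) \<in> M' \<and> (\<exists>q. (s, q) \<in> M \<and> prefers (spref s) q p))}"

end

theory Submission
  imports Defs
begin

text \<open>
  Let K (join_better) give every student assigned in M or M' the better of her projects, and
  J (join_worse) the worse one. At a project p the students of M split into those kept in M',
  those leaving p for something better in M' (upgrades_from) and those arriving at p from
  something worse in M' (upgrades_to); J at p consists of the kept students and the leavers of
  both sides, K of the kept students and the arrivals of both sides.

  Stability of M means that the lecturer of p refuses every arrival from M'. Hence arrivals at p
  come from one side only, and every lecturer's load in K is at most her load in M. Summing over
  lecturers, K assigns at most as many students as M, although it assigns every student assigned
  in M or M'. So M and M' assign the same students, every lecturer has the same load in M, M'
  and K, and all the bounds are tight; tightness balances arrivals against leavers, which makes J
  agree at each project with M or with M'. Thus J is a matching with the same loads. Finally,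
  every student a lecturer holds in J she also holds in M or ranks above someone she holds in M
  (and likewise for M'), so a student refused in M or M' is refused in J: J has no blocking pair.
\<close>

section \<open>Preference lists\<close>

lemma prefers_irrefl: "distinct xs \<Longrightarrow> \<not> prefers xs a a"
  unfolding prefers_def by (auto simp: nth_eq_iff_index_eq)

lemma prefers_asym: "distinct xs \<Longrightarrow> prefers xs a b \<Longrightarrow> \<not> prefers xs b a"
  unfolding prefers_def by (metis nth_eq_iff_index_eq order.strict_trans order.asym)

lemma prefers_trans: "distinct xs \<Longrightarrow> prefers xs a b \<Longrightarrow> prefers xs b c \<Longrightarrow> prefers xs a c"
  unfolding prefers_def by (metis nth_eq_iff_index_eq order.strict_trans)

lemma prefers_total:
  "a \<in> set xs \<Longrightarrow> b \<in> set xs \<Longrightarrow> a \<noteq> b \<Longrightarrow> prefers xs a b \<or> prefers xs b a"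
  unfolding prefers_def in_set_conv_nth by (metis linorder_neqE_nat)

lemma ball_prefers_trans:
  assumes "distinct xs" "\<forall>t\<in>X. prefers xs t b" "prefers xs b c"
  shows "\<forall>t\<in>X. prefers xs t c"
  using assms(2) prefers_trans[OF assms(1) _ assms(3)] by blast

lemma ex1_worst:
  assumes "distinct xs" "finite X" "X \<noteq> {}" "X \<subseteq> set xs"
  shows "\<exists>!w. w \<in> X \<and> (\<forall>t\<in>X. t \<noteq> w \<longrightarrow> prefers xs t w)"
proof (rule ex_ex1I)
  show "\<exists>w. w \<in> X \<and> (\<forall>t\<in>X. t \<noteq> w \<longrightarrow> prefers xs t w)"
    using assms(2-4)
  proof (induction X rule: finite_ne_induct)
    case (singleton x)
    then show ?case by auto
  next
    case (insert x F)
    have "F \<subseteq> set xs" "x \<in> set xs"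
      using insert.prems by simp_all
    then obtain w where w: "w \<in> F" "\<forall>t\<in>F. t \<noteq> w \<longrightarrow> prefers xs t w"
      using insert.IH by blast
    have "x \<noteq> w" "w \<in> set xs"
      using insert.hyps w \<open>F \<subseteq> set xs\<close> by auto
    then consider "prefers xs x w" | "prefers xs w x"
      using prefers_total \<open>x \<in> set xs\<close> by metis
    then show ?case
    proof cases
      case 1
      then show ?thesis
        using w by auto
    next
      case 2
      then have "\<forall>t\<in>insert x F. t \<noteq> x \<longrightarrow> prefers xs t x"
        using w prefers_trans[OF assms(1), of _ w x] by auto
      then show ?thesis
        by blast
    qed
  qed
next
  fix w v
  assume "w \<in> X \<and> (\<forall>t\<in>X. t \<noteq> w \<longrightarrow> prefers xs t w)"
    and "v \<in> X \<and> (\<forall>t\<in>X. t \<noteq> v \<longrightarrow> prefers xs t v)"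
  then show "w = v"
    using prefers_asym[OF assms(1), of w v] by metis
qed

lemma worst_spec:
  assumes "distinct xs" "finite X" "X \<noteq> {}" "X \<subseteq> set xs"
  shows "worst xs X \<in> X" "\<forall>t\<in>X. t \<noteq> worst xs X \<longrightarrow> prefers xs t (worst xs X)"
  using theI'[OF ex1_worst[OF assms]] unfolding worst_def by auto

lemma prefers_worst_iff:
  assumes "distinct xs" "finite X" "X \<noteq> {}" "X \<subseteq> set xs"
  shows "prefers xs s (worst xs X) \<longleftrightarrow> (\<exists>t\<in>X. prefers xs s t)"
proof
  show "\<exists>t\<in>X. prefers xs s t" if "prefers xs s (worst xs X)"
    using that worst_spec(1)[OF assms] by blast
  show "prefers xs s (worst xs X)" if better: "\<exists>t\<in>X. prefers xs s t"
  proof -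
    obtain t where "t \<in> X" "prefers xs s t"
      using better by blast
    then show ?thesis
      using worst_spec(2)[OF assms] prefers_trans[OF assms(1), of s t]
      by (cases "t = worst xs X") simp_all
  qed
qed

lemma prefers_worst_iff_not_all_prefer:
  assumes "distinct xs" "finite X" "X \<noteq> {}" "X \<subseteq> set xs" "s \<in> set xs" "s \<notin> X"
  shows "prefers xs s (worst xs X) \<longleftrightarrow> \<not> (\<forall>t\<in>X. prefers xs t s)"
proof -
  have "prefers xs s t \<longleftrightarrow> \<not> prefers xs t s" if "t \<in> X" for t
    using that assms(4-6) prefers_total[of s xs t] prefers_asym[OF assms(1), of s t] by auto
  then show ?thesis
    using prefers_worst_iff[OF assms(1-4)] by auto
qed

section \<open>Counting the students of an assignment\<close>

lemma card_Un3_disjoint: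
  assumes "finite A" "finite B" "finite C" "A \<inter> B = {}" "A \<inter> C = {}" "B \<inter> C = {}"
  shows "card (A \<union> B \<union> C) = card A + card B + card C"
  using assms by (simp add: card_Un_disjoint Int_Un_distrib2)

lemma card_Domain_eq_sum_assigned_p:
  assumes "finite N" "single_valued N" "finite Q" "Range N \<subseteq> Q"
  shows "card (Domain N) = (\<Sum>p\<in>Q. card (assigned_p N p))"
proof -
  have "Domain N = (\<Union>p\<in>Q. assigned_p N p)"
    using assms(4) unfolding assigned_p_def by auto
  moreover have "\<forall>p\<in>Q. finite (assigned_p N p)"
    using finite_Domain[OF assms(1)] unfolding assigned_p_def
    by (auto intro: finite_subset[of _ "Domain N"])
  moreover have "\<forall>p\<in>Q. \<forall>q\<in>Q. p \<noteq> q \<longrightarrow> assigned_p N p \<inter> assigned_p N q = {}"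
    using assms(2) unfolding assigned_p_def single_valued_def by blast
  ultimately show ?thesis
    using assms(3) by (simp add: card_UN_disjoint)
qed

lemma card_assigned_l_eq_sum_assigned_p:
  assumes "finite N" "single_valued N" "finite Q" "Range N \<subseteq> Q"
  shows "card (assigned_l lec N l) = (\<Sum>p\<in>{p\<in>Q. lec p = l}. card (assigned_p N p))"
proof -
  let ?N = "{(s, p)\<in>N. lec p = l}"
  have "assigned_l lec N l = Domain ?N"
    unfolding assigned_l_def by auto
  also have "card \<dots> = (\<Sum>p\<in>{p\<in>Q. lec p = l}. card (assigned_p ?N p))"
  proof (rule card_Domain_eq_sum_assigned_p)
    show "finite ?N"
      using assms(1) by (rule rev_finite_subset) auto
  qed (use assms in \<open>auto simp: single_valued_def\<close>)
  also have "\<dots> = (\<Sum>p\<in>{p\<in>Q. lec p = l}. card (assigned_p N p))"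
    unfolding assigned_p_def by (intro sum.cong) auto
  finally show ?thesis .
qed

section \<open>Matchings of an SPA-S instance\<close>

definition desires :: "('s \<Rightarrow> 'p list) \<Rightarrow> ('s \<times> 'p) set \<Rightarrow> 's \<Rightarrow> 'p \<Rightarrow> bool" where
  "desires spref N s p \<longleftrightarrow>
     (s, p) \<notin> N \<and> ((\<forall>q. (s, q) \<notin> N) \<or> (\<exists>q. (s, q) \<in> N \<and> prefers (spref s) p q))"

definition join_better :: "('s \<Rightarrow> 'p list) \<Rightarrow> ('s \<times> 'p) set \<Rightarrow> ('s \<times> 'p) set \<Rightarrow> ('s \<times> 'p) set" where
  "join_better spref M M' = {(s, p).
     ((s, p) \<in> M \<and> (\<forall>r. (s, r) \<in> M' \<longrightarrow> r = p \<or> prefers (spref s) p r)) \<or>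
     ((s, p) \<in> M' \<and> (\<forall>r. (s, r) \<in> M \<longrightarrow> r = p \<or> prefers (spref s) p r))}"

lemma join_better_commute: "join_better spref M' M = join_better spref M M'"
  unfolding join_better_def by blast

lemma join_worse_commute: "join_worse spref M' M = join_worse spref M M'"
  unfolding join_worse_def by blast

lemma join_worse_subset: "join_worse spref M M' \<subseteq> M \<union> M'"
  unfolding join_worse_def by blast

lemma join_better_subset: "join_better spref M M' \<subseteq> M \<union> M'"
  unfolding join_better_def by blast

locale spa =
  fixes S :: "'s set" and P :: "'p set" and L :: "'l set"
    and spref :: "'s \<Rightarrow> 'p list" and lec :: "'p \<Rightarrow> 'l" and lpref :: "'l \<Rightarrow> 's list"
    and cp :: "'p \<Rightarrow> nat" and cl :: "'l \<Rightarrow> nat"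
  assumes spa_inst: "spa_instance S P L spref lec lpref cp cl"
begin

lemma finite_S: "finite S"
  and finite_P: "finite P"
  and finite_L: "finite L"
  and lec_in_L: "p \<in> P \<Longrightarrow> lec p \<in> L"
  and distinct_spref: "s \<in> S \<Longrightarrow> distinct (spref s)"
  and distinct_lpref: "l \<in> L \<Longrightarrow> distinct (lpref l)"
  and cp_pos: "p \<in> P \<Longrightarrow> 0 < cp p"
  and cl_pos: "l \<in> L \<Longrightarrow> 0 < cl l"
  using spa_inst unfolding spa_instance_def by auto

lemma acceptableD:
  assumes "acceptable S spref lec lpref s p"
  shows "s \<in> S" "p \<in> P" "p \<in> set (spref s)" "s \<in> set (lpref (lec p))"
  using assms spa_inst unfolding acceptable_def spa_instance_def by auto

abbreviation is_matching :: "('s \<times> 'p) set \<Rightarrow> bool" where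
  "is_matching N \<equiv> matching S P L spref lec lpref cp cl N"

abbreviation is_stable :: "('s \<times> 'p) set \<Rightarrow> bool" where
  "is_stable N \<equiv> stable S P L spref lec lpref cp cl N"

lemma matching_acceptable:
  "is_matching N \<Longrightarrow> (s, p) \<in> N \<Longrightarrow> acceptable S spref lec lpref s p"
  unfolding matching_def by (elim conjE) blast

lemma matching_single_valued: "is_matching N \<Longrightarrow> single_valued N"
  unfolding matching_def single_valued_def by (elim conjE) blast

lemma matching_subset:
  assumes "is_matching N"
  shows "N \<subseteq> S \<times> P"
  using acceptableD(1,2) matching_acceptable[OF assms] by fast

lemma matching_capacities:
  assumes "is_matching N"
  shows "p \<in> P \<Longrightarrow> card (assigned_p N p) \<le> cp p" "l \<in> L \<Longrightarrow> card (assigned_l lec N l) \<le> cl l"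
  using assms unfolding matching_def by (elim conjE; blast)+

lemma assigned_p_subset_assigned_l: "assigned_p N p \<subseteq> assigned_l lec N (lec p)"
  unfolding assigned_p_def assigned_l_def by blast

lemma assigned_l_subset:
  assumes "is_matching N"
  shows "assigned_l lec N l \<subseteq> S \<inter> set (lpref l)"
  using acceptableD(1,4) matching_acceptable[OF assms] unfolding assigned_l_def by blast

lemma finite_assigned:
  assumes "is_matching N"
  shows "finite (assigned_l lec N l)" "finite (assigned_p N p)"
proof -
  show l: "finite (assigned_l lec N l)" for l
    by (rule finite_subset[OF _ finite_S]) (use assigned_l_subset[OF assms] in blast)
  show "finite (assigned_p N p)"
    using l assigned_p_subset_assigned_l by (rule rev_finite_subset)
qed

lemma finite_if_subset_S_P: "N \<subseteq> S \<times> P \<Longrightarrow> finite N"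
  by (rule finite_subset[OF _ finite_cartesian_product[OF finite_S finite_P]])

lemma load_eq_sum:
  assumes "N \<subseteq> S \<times> P" "single_valued N"
  shows "card (assigned_l lec N l) = (\<Sum>p\<in>{p\<in>P. lec p = l}. card (assigned_p N p))"
  using assms finite_if_subset_S_P finite_P by (intro card_assigned_l_eq_sum_assigned_p) auto

lemma sum_loads_eq_card_Domain:
  assumes "N \<subseteq> S \<times> P" "single_valued N"
  shows "(\<Sum>l\<in>L. card (assigned_l lec N l)) = card (Domain N)"
proof -
  have "(\<Sum>l\<in>L. card (assigned_l lec N l)) = (\<Sum>l\<in>L. \<Sum>p\<in>{p\<in>P. lec p = l}. card (assigned_p N p))"
    using load_eq_sum[OF assms] by simp
  also have "\<dots> = (\<Sum>p\<in>P. card (assigned_p N p))"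
    using finite_P finite_L lec_in_L by (intro sum.group) auto
  also have "\<dots> = card (Domain N)"
    using assms finite_if_subset_S_P finite_P
    by (intro card_Domain_eq_sum_assigned_p[symmetric]) auto
  finally show ?thesis .
qed

definition refuses :: "('s \<times> 'p) set \<Rightarrow> 's \<Rightarrow> 'p \<Rightarrow> bool" where
  "refuses N s p \<longleftrightarrow>
     (card (assigned_p N p) = cp p \<and> (\<forall>t\<in>assigned_p N p. prefers (lpref (lec p)) t s)) \<or>
     (card (assigned_p N p) < cp p \<and> card (assigned_l lec N (lec p)) = cl (lec p) \<and>
      (\<forall>t\<in>assigned_l lec N (lec p). prefers (lpref (lec p)) t s))"

lemma prefers_worst_assigned_iff:
  assumes "is_matching N" "acceptable S spref lec lpref s p"
    and "X \<subseteq> assigned_l lec N (lec p)" "X \<noteq> {}" "s \<notin> X"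
  shows "prefers (lpref (lec p)) s (worst (lpref (lec p)) X) \<longleftrightarrow>
    \<not> (\<forall>t\<in>X. prefers (lpref (lec p)) t s)"
proof (rule prefers_worst_iff_not_all_prefer)
  show "distinct (lpref (lec p))"
    using acceptableD(2)[OF assms(2)] by (intro distinct_lpref lec_in_L)
  show "finite X"
    using finite_subset[OF assms(3) finite_assigned(1)[OF assms(1)]] .
  show "X \<subseteq> set (lpref (lec p))"
    using assms(3) assigned_l_subset[OF assms(1)] by blast
  show "s \<in> set (lpref (lec p))"
    using acceptableD(4)[OF assms(2)] .
qed (use assms(4,5) in auto)

lemma blocking_pair_iff_not_refuses:
  assumes "is_matching N" "acceptable S spref lec lpref s p" "desires spref N s p"
  shows "blocking_pair S spref lec lpref cp cl N s p \<longleftrightarrow> \<not> refuses N s p"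
proof -
  define l Np Nl where "l = lec p" and "Np = assigned_p N p" and "Nl = assigned_l lec N l"
  have "p \<in> P" "s \<notin> Np"
    using assms(2,3) acceptableD(2) unfolding Np_def assigned_p_def desires_def by auto
  have "Np \<subseteq> Nl"
    unfolding Np_def Nl_def l_def by (rule assigned_p_subset_assigned_l)
  have caps: "card Np \<le> cp p" "card Nl \<le> cl l" "0 < cp p" "0 < cl l"
    using matching_capacities[OF assms(1)] lec_in_L cp_pos cl_pos \<open>p \<in> P\<close>
    unfolding Np_def Nl_def l_def by auto
  have blocking: "blocking_pair S spref lec lpref cp cl N s p \<longleftrightarrow>
    (card Np < cp p \<and> card Nl < cl l) \<or>
    (card Np < cp p \<and> card Nl = cl l \<and> s \<in> Nl) \<or>
    (card Np < cp p \<and> card Nl = cl l \<and> prefers (lpref l) s (worst (lpref l) Nl)) \<or>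
    (card Np = cp p \<and> prefers (lpref l) s (worst (lpref l) Np))"
    using assms(2,3) unfolding blocking_pair_def desires_def Let_def l_def Np_def Nl_def by blast
  have refusing: "refuses N s p \<longleftrightarrow>
    (card Np = cp p \<and> (\<forall>t\<in>Np. prefers (lpref l) t s)) \<or>
    (card Np < cp p \<and> card Nl = cl l \<and> (\<forall>t\<in>Nl. prefers (lpref l) t s))"
    unfolding refuses_def l_def Np_def Nl_def ..
  have worst_iff: "prefers (lpref l) s (worst (lpref l) X) \<longleftrightarrow> \<not> (\<forall>t\<in>X. prefers (lpref l) t s)"
    if "X \<subseteq> Nl" "X \<noteq> {}" "s \<notin> X" for X
    using prefers_worst_assigned_iff[OF assms(1,2) that[unfolded Nl_def l_def]] unfolding l_def .
  consider "card Np = cp p" | "card Np < cp p" "card Nl < cl l" | "card Np < cp p" "card Nl = cl l"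
    using caps(1,2) by linarith
  then show ?thesis
  proof cases
    case 1
    then show ?thesis
      using blocking refusing worst_iff[of Np] \<open>s \<notin> Np\<close> \<open>Np \<subseteq> Nl\<close> caps(3) by force
  next
    case 2
    then show ?thesis
      using blocking refusing by simp
  next
    case 3
    have "s \<in> Nl \<Longrightarrow> \<not> (\<forall>t\<in>Nl. prefers (lpref l) t s)"
      using prefers_irrefl[OF distinct_lpref[OF lec_in_L[OF \<open>p \<in> P\<close>]]] unfolding l_def by blast
    then show ?thesis
      using 3 blocking refusing worst_iff[of Nl] caps(4) by force
  qed
qed

lemma blocking_pair_iff:
  assumes "is_matching N"
  shows "blocking_pair S spref lec lpref cp cl N s p \<longleftrightarrow>
    acceptable S spref lec lpref s p \<and> desires spref N s p \<and> \<not> refuses N s p"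
  using blocking_pair_iff_not_refuses[OF assms]
  unfolding blocking_pair_def desires_def Let_def by blast

lemma stable_refuses:
  assumes "is_stable N" "acceptable S spref lec lpref s p" "desires spref N s p"
  shows "refuses N s p"
  using assms blocking_pair_iff unfolding stable_def by blast

lemma refuses_prefers:
  assumes "refuses N s p" "t \<in> assigned_p N p"
  shows "prefers (lpref (lec p)) t s"
  using assms assigned_p_subset_assigned_l[of N p] unfolding refuses_def by blast

lemma refuses_if_lecturer_full:
  assumes "is_matching N" "p \<in> P" "card (assigned_l lec N (lec p)) = cl (lec p)"
    and "\<forall>t\<in>assigned_l lec N (lec p). prefers (lpref (lec p)) t s"
  shows "refuses N s p"
proof -
  have "\<forall>t\<in>assigned_p N p. prefers (lpref (lec p)) t s"
    using assms(4) assigned_p_subset_assigned_l[of N p] by blast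
  moreover have "card (assigned_p N p) \<le> cp p"
    using matching_capacities(1)[OF assms(1,2)] .
  ultimately show ?thesis
    using assms(3,4) unfolding refuses_def by linarith
qed

lemma matching_distinct_spref: "is_matching N \<Longrightarrow> (s, q) \<in> N \<Longrightarrow> distinct (spref s)"
  using matching_acceptable acceptableD(1) distinct_spref by blast

lemma matching_prefers_total:
  assumes "is_matching N" "is_matching N'" "(s, p) \<in> N" "(s, q) \<in> N'" "p \<noteq> q"
  shows "prefers (spref s) p q \<or> prefers (spref s) q p"
  using assms matching_acceptable acceptableD(3) prefers_total by metis

definition upgrades_to :: "('s \<times> 'p) set \<Rightarrow> ('s \<times> 'p) set \<Rightarrow> 'p \<Rightarrow> 's set" where
  "upgrades_to N N' p = {s. (s, p) \<in> N' \<and> (\<forall>r. (s, r) \<in> N \<longrightarrow> prefers (spref s) p r)}"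

definition upgrades_from :: "('s \<times> 'p) set \<Rightarrow> ('s \<times> 'p) set \<Rightarrow> 'p \<Rightarrow> 's set" where
  "upgrades_from N N' p = {s. (s, p) \<in> N \<and> (\<exists>r. (s, r) \<in> N' \<and> prefers (spref s) r p)}"

lemma upgrades_to_subset: "upgrades_to N N' p \<subseteq> assigned_p N' p"
  unfolding upgrades_to_def assigned_p_def by blast

lemma upgrades_from_subset: "upgrades_from N N' p \<subseteq> assigned_p N p"
  unfolding upgrades_from_def assigned_p_def by blast

text \<open>Only at such lecturers can the better join hold more students at a project than N.\<close>
definition upgrade_to_undersubscribed :: "('s \<times> 'p) set \<Rightarrow> ('s \<times> 'p) set \<Rightarrow> 'l \<Rightarrow> bool" where
  "upgrade_to_undersubscribed N N' l \<longleftrightarrow>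
     (\<exists>p\<in>P. lec p = l \<and> upgrades_to N N' p \<noteq> {} \<and> card (assigned_p N p) < cp p)"

context
  fixes N N' :: "('s \<times> 'p) set"
  assumes matching_N: "is_matching N" and matching_N': "is_matching N'"
begin

private lemma single_valued_both: "single_valued N" "single_valued N'"
  using matching_N matching_N' by (simp_all add: matching_single_valued)

private lemma spref_irrefl:
  "(s, q) \<in> N \<Longrightarrow> \<not> prefers (spref s) p p" "(s, q) \<in> N' \<Longrightarrow> \<not> prefers (spref s) p p"
  by (rule prefers_irrefl[OF matching_distinct_spref[OF matching_N]]
      prefers_irrefl[OF matching_distinct_spref[OF matching_N']]; assumption)+

private lemma spref_asym:
  "(s, q) \<in> N \<Longrightarrow> prefers (spref s) p r \<Longrightarrow> \<not> prefers (spref s) r p"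
  "(s, q) \<in> N' \<Longrightarrow> prefers (spref s) p r \<Longrightarrow> \<not> prefers (spref s) r p"
  by (rule prefers_asym[OF matching_distinct_spref[OF matching_N]]
      prefers_asym[OF matching_distinct_spref[OF matching_N']]; assumption)+

private lemma finite_parts:
  "finite (assigned_p N p \<inter> assigned_p N' p)"
  "finite (upgrades_from N N' p)" "finite (upgrades_from N' N p)"
  "finite (upgrades_to N N' p)" "finite (upgrades_to N' N p)"
proof -
  have fin: "finite (assigned_p N p)" "finite (assigned_p N' p)"
    using finite_assigned(2)[OF matching_N] finite_assigned(2)[OF matching_N'] .
  then show "finite (assigned_p N p \<inter> assigned_p N' p)"
    by simp
  show "finite (upgrades_from N N' p)" "finite (upgrades_from N' N p)"
    using finite_subset[OF upgrades_from_subset fin(1)]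
      finite_subset[OF upgrades_from_subset fin(2)] .
  show "finite (upgrades_to N N' p)" "finite (upgrades_to N' N p)"
    using finite_subset[OF upgrades_to_subset fin(2)]
      finite_subset[OF upgrades_to_subset fin(1)] .
qed

lemma assigned_p_decomp:
  "assigned_p N p = (assigned_p N p \<inter> assigned_p N' p) \<union> upgrades_from N N' p \<union> upgrades_to N' N p"
proof (rule equalityI)
  have "s \<in> assigned_p N' p \<or> s \<in> upgrades_from N N' p \<or> s \<in> upgrades_to N' N p"
    if sp: "(s, p) \<in> N" for s
  proof (cases "\<exists>r. (s, r) \<in> N'")
    case True
    then obtain r where sr: "(s, r) \<in> N'" ..
    have unique: "r' = r" if "(s, r') \<in> N'" for r'
      using that sr single_valued_both(2) unfolding single_valued_def by blast
    consider "r = p" | "prefers (spref s) r p" | "prefers (spref s) p r"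
      using matching_prefers_total[OF matching_N matching_N' sp sr] by blast
    then show ?thesis
    proof cases
      case 1
      then show ?thesis
        using sr unfolding assigned_p_def by simp
    next
      case 2
      then show ?thesis
        using sp sr unfolding upgrades_from_def by blast
    next
      case 3
      then show ?thesis
        using sp unique unfolding upgrades_to_def by blast
    qed
  next
    case False
    then show ?thesis
      using sp unfolding upgrades_to_def by blast
  qed
  then show "assigned_p N p \<subseteq>
    (assigned_p N p \<inter> assigned_p N' p) \<union> upgrades_from N N' p \<union> upgrades_to N' N p"
    unfolding assigned_p_def by blast
  show "(assigned_p N p \<inter> assigned_p N' p) \<union> upgrades_from N N' p \<union> upgrades_to N' N p
    \<subseteq> assigned_p N p"
    using upgrades_from_subset[of N N' p] upgrades_to_subset[of N' N p] by blast
qed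

lemma card_assigned_p_decomp:
  "card (assigned_p N p) =
     card (assigned_p N p \<inter> assigned_p N' p) + card (upgrades_from N N' p) +
     card (upgrades_to N' N p)"
proof -
  have "finite (assigned_p N p \<inter> assigned_p N' p)" "finite (upgrades_from N N' p)"
    "finite (upgrades_to N' N p)"
    by (simp_all add: finite_parts)
  moreover have "(assigned_p N p \<inter> assigned_p N' p) \<inter> upgrades_from N N' p = {}"
    using single_valued_both(2) spref_irrefl(2)
    unfolding assigned_p_def upgrades_from_def single_valued_def by blast
  moreover have "(assigned_p N p \<inter> assigned_p N' p) \<inter> upgrades_to N' N p = {}"
    using spref_irrefl(2) unfolding assigned_p_def upgrades_to_def by blast
  moreover have "upgrades_from N N' p \<inter> upgrades_to N' N p = {}"
    using spref_asym(2) unfolding upgrades_from_def upgrades_to_def by blast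
  ultimately show ?thesis
    by (subst assigned_p_decomp) (rule card_Un3_disjoint)
qed

lemma assigned_p_join_worse:
  "assigned_p (join_worse spref N N') p =
     (assigned_p N p \<inter> assigned_p N' p) \<union> upgrades_from N N' p \<union> upgrades_from N' N p"
  unfolding assigned_p_def join_worse_def upgrades_from_def by auto

lemma card_assigned_p_join_worse:
  "card (assigned_p (join_worse spref N N') p) =
     card (assigned_p N p \<inter> assigned_p N' p) + card (upgrades_from N N' p) +
     card (upgrades_from N' N p)"
proof -
  have "finite (assigned_p N p \<inter> assigned_p N' p)" "finite (upgrades_from N N' p)"
    "finite (upgrades_from N' N p)"
    by (simp_all add: finite_parts)
  moreover have "(assigned_p N p \<inter> assigned_p N' p) \<inter> upgrades_from N N' p = {}"
    using single_valued_both(2) spref_irrefl(2)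
    unfolding assigned_p_def upgrades_from_def single_valued_def by blast
  moreover have "(assigned_p N p \<inter> assigned_p N' p) \<inter> upgrades_from N' N p = {}"
    using single_valued_both(1) spref_irrefl(1)
    unfolding assigned_p_def upgrades_from_def single_valued_def by blast
  moreover have "upgrades_from N N' p \<inter> upgrades_from N' N p = {}"
    using single_valued_both(2) spref_irrefl(2)
    unfolding upgrades_from_def single_valued_def by blast
  ultimately show ?thesis
    by (subst assigned_p_join_worse) (rule card_Un3_disjoint)
qed

lemma assigned_p_join_better:
  "assigned_p (join_better spref N N') p =
     (assigned_p N p \<inter> assigned_p N' p) \<union> upgrades_to N N' p \<union> upgrades_to N' N p"
  using single_valued_both
  unfolding single_valued_def assigned_p_def join_better_def upgrades_to_def by blast

lemma card_assigned_p_join_better: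
  "card (assigned_p (join_better spref N N') p) =
     card (assigned_p N p \<inter> assigned_p N' p) + card (upgrades_to N N' p) +
     card (upgrades_to N' N p)"
proof -
  have "finite (assigned_p N p \<inter> assigned_p N' p)" "finite (upgrades_to N N' p)"
    "finite (upgrades_to N' N p)"
    by (simp_all add: finite_parts)
  moreover have "(assigned_p N p \<inter> assigned_p N' p) \<inter> upgrades_to N N' p = {}"
    using spref_irrefl(1) unfolding assigned_p_def upgrades_to_def by blast
  moreover have "(assigned_p N p \<inter> assigned_p N' p) \<inter> upgrades_to N' N p = {}"
    using spref_irrefl(2) unfolding assigned_p_def upgrades_to_def by blast
  moreover have "upgrades_to N N' p \<inter> upgrades_to N' N p = {}"
    using spref_irrefl(1) unfolding upgrades_to_def by blast
  ultimately show ?thesis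
    by (subst assigned_p_join_better) (rule card_Un3_disjoint)
qed

lemma single_valued_join_better: "single_valued (join_better spref N N')"
  using single_valued_both spref_asym unfolding single_valued_def join_better_def by blast

lemma single_valued_join_worse: "single_valued (join_worse spref N N')"
  using single_valued_both spref_asym unfolding single_valued_def join_worse_def by blast

lemma Domain_join_better: "Domain (join_better spref N N') = Domain N \<union> Domain N'"
proof -
  have "s \<in> Domain (join_better spref N N')" if sp: "(s, p) \<in> N" and sq: "(s, q) \<in> N'" for s p q
  proof (cases "prefers (spref s) q p")
    case True
    have "r = p" if "(s, r) \<in> N" for r
      using that sp single_valued_both(1) unfolding single_valued_def by blast
    then have "(s, q) \<in> join_better spref N N'"
      using sq True unfolding join_better_def by blast
    then show ?thesis ..
  next
    case False
    have "r = q" if "(s, r) \<in> N'" for r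
      using that sq single_valued_both(2) unfolding single_valued_def by blast
    moreover have "p = q \<or> prefers (spref s) p q"
      using False matching_prefers_total[OF matching_N matching_N' sp sq] by blast
    ultimately have "(s, p) \<in> join_better spref N N'"
      using sp unfolding join_better_def by blast
    then show ?thesis ..
  qed
  then show ?thesis
    unfolding join_better_def by blast
qed

lemma Domain_join_worse:
  assumes "Domain N' = Domain N"
  shows "Domain (join_worse spref N N') = Domain N"
proof -
  have "s \<in> Domain (join_worse spref N N')" if sp: "(s, p) \<in> N" for s p
  proof -
    obtain q where sq: "(s, q) \<in> N'"
      using sp assms by blast
    show ?thesis
    proof (cases "prefers (spref s) p q")
      case True
      then have "(s, q) \<in> join_worse spref N N'"
        using sp sq unfolding join_worse_def by blast
      then show ?thesis ..
    next
      case False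
      then have "p = q \<or> prefers (spref s) q p"
        using matching_prefers_total[OF matching_N matching_N' sp sq] by blast
      then have "(s, p) \<in> join_worse spref N N'"
        using sp sq unfolding join_worse_def by blast
      then show ?thesis ..
    qed
  qed
  moreover have "Domain (join_worse spref N N') \<subseteq> Domain N \<union> Domain N'"
    using join_worse_subset[of spref N N'] by blast
  ultimately show ?thesis
    using assms by blast
qed

end

end

section \<open>Two stable matchings\<close>

locale stable_pair = spa +
  fixes M M'
  assumes stable_M: "stable S P L spref lec lpref cp cl M"
    and stable_M': "stable S P L spref lec lpref cp cl M'"
begin

lemma stable_pair_swap: "stable_pair S P L spref lec lpref cp cl M' M"
  using spa_axioms stable_M stable_M' by (simp add: stable_pair_def stable_pair_axioms_def)

lemma matching_M: "is_matching M" and matching_M': "is_matching M'"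
  using stable_M stable_M' unfolding stable_def by simp_all

lemma M_subset_single_valued: "M \<subseteq> S \<times> P" "single_valued M"
  using matching_subset[OF matching_M] matching_single_valued[OF matching_M] .

lemma join_better_subset_single_valued:
  "join_better spref M M' \<subseteq> S \<times> P" "single_valued (join_better spref M M')"
  using join_better_subset[of spref M M'] matching_subset[OF matching_M]
    matching_subset[OF matching_M']
    single_valued_join_better[OF matching_M matching_M']
  by blast+

lemma join_worse_subset_single_valued:
  "join_worse spref M M' \<subseteq> S \<times> P" "single_valued (join_worse spref M M')"
  using join_worse_subset[of spref M M'] matching_subset[OF matching_M]
    matching_subset[OF matching_M']
    single_valued_join_worse[OF matching_M matching_M']
  by blast+

lemma refuses_upgrade_to:
  assumes "a \<in> upgrades_to M M' p"
  shows "refuses M a p"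
proof -
  have aM': "(a, p) \<in> M'" and better: "\<forall>r. (a, r) \<in> M \<longrightarrow> prefers (spref a) p r"
    using assms unfolding upgrades_to_def by auto
  have "(a, p) \<notin> M"
    using better prefers_irrefl[OF matching_distinct_spref[OF matching_M' aM']] by blast
  then have "desires spref M a p"
    using better unfolding desires_def by blast
  then show ?thesis
    using stable_refuses[OF stable_M matching_acceptable[OF matching_M' aM']] by blast
qed

lemma upgrades_to_exclusive: "upgrades_to M M' p = {} \<or> upgrades_to M' M p = {}"
proof (rule ccontr)
  assume "\<not> ?thesis"
  then obtain a b where a: "a \<in> upgrades_to M M' p" and b: "b \<in> upgrades_to M' M p"
    by blast
  interpret swapped: stable_pair S P L spref lec lpref cp cl M' M
    by (rule stable_pair_swap)
  have "(a, p) \<in> M'"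
    using a unfolding upgrades_to_def by blast
  then have "p \<in> P"
    using acceptableD(2) matching_acceptable[OF matching_M'] by blast
  then have lpref: "distinct (lpref (lec p))"
    by (intro distinct_lpref lec_in_L)
  have "prefers (lpref (lec p)) b a"
    using refuses_prefers[OF refuses_upgrade_to[OF a]] upgrades_to_subset[of M' M p] b by blast
  moreover have "prefers (lpref (lec p)) a b"
    using refuses_prefers[OF swapped.refuses_upgrade_to[OF b]] upgrades_to_subset[of M M' p] a
    by blast
  ultimately show False
    using prefers_asym[OF lpref] by blast
qed

lemma upgrade_to_undersubscribedE:
  assumes "upgrade_to_undersubscribed M M' l"
  obtains a where "l \<in> L" "a \<in> assigned_l lec M' l" "card (assigned_l lec M l) = cl l"
    "\<forall>t\<in>assigned_l lec M l. prefers (lpref l) t a"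
proof -
  obtain p a where p: "p \<in> P" "lec p = l" and a: "a \<in> upgrades_to M M' p"
    and room: "card (assigned_p M p) < cp p"
    using assms unfolding upgrade_to_undersubscribed_def by blast
  have "card (assigned_l lec M l) = cl l \<and> (\<forall>t\<in>assigned_l lec M l. prefers (lpref l) t a)"
    using refuses_upgrade_to[OF a] room p(2) unfolding refuses_def by auto
  moreover have "a \<in> assigned_l lec M' l"
    using a p(2) upgrades_to_subset[of M M' p] assigned_p_subset_assigned_l[of M' p] by blast
  ultimately show thesis
    using lec_in_L[OF p(1)] p(2) by (intro that[of a]) auto
qed

lemma not_upgrade_to_undersubscribed_both:
  "\<not> (upgrade_to_undersubscribed M M' l \<and> upgrade_to_undersubscribed M' M l)"
proof
  assume both: "upgrade_to_undersubscribed M M' l \<and> upgrade_to_undersubscribed M' M l"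
  interpret swapped: stable_pair S P L spref lec lpref cp cl M' M
    by (rule stable_pair_swap)
  obtain a where "l \<in> L" "a \<in> assigned_l lec M' l" "card (assigned_l lec M l) = cl l"
    "\<forall>t\<in>assigned_l lec M l. prefers (lpref l) t a"
    using both by (elim conjE upgrade_to_undersubscribedE)
  moreover obtain b where "l \<in> L" "b \<in> assigned_l lec M l" "card (assigned_l lec M' l) = cl l"
    "\<forall>t\<in>assigned_l lec M' l. prefers (lpref l) t b"
    using both by (elim conjE swapped.upgrade_to_undersubscribedE)
  ultimately show False
    using prefers_asym[OF distinct_lpref, of l a b] by blast
qed

lemma card_assigned_p_join_better_le:
  assumes "p \<in> P" "\<not> (upgrades_to M M' p \<noteq> {} \<and> card (assigned_p M p) < cp p)"
  shows "card (assigned_p (join_better spref M M') p) \<le> card (assigned_p M p)"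
proof (cases "upgrades_to M M' p = {}")
  case True
  then show ?thesis
    using card_assigned_p_join_better[OF matching_M matching_M', of p]
      card_assigned_p_decomp[OF matching_M matching_M', of p]
    by simp
next
  case False
  then have "upgrades_to M' M p = {}"
    using upgrades_to_exclusive by blast
  then have "card (assigned_p (join_better spref M M') p) \<le> card (assigned_p M' p)"
    using card_assigned_p_join_better[OF matching_M matching_M', of p]
      card_assigned_p_decomp[OF matching_M' matching_M, of p]
    by (simp add: Int_commute)
  also have "\<dots> \<le> cp p"
    using matching_capacities(1)[OF matching_M' assms(1)] .
  also have "\<dots> \<le> card (assigned_p M p)"
    using assms(2) False by simp
  finally show ?thesis .
qed

lemma load_join_better_le_if_no_upgrade_to_undersubscribed:
  assumes "\<not> upgrade_to_undersubscribed M M' l"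
  shows "card (assigned_l lec (join_better spref M M') l) \<le> card (assigned_l lec M l)"
proof -
  have "card (assigned_l lec (join_better spref M M') l) =
      (\<Sum>p\<in>{p\<in>P. lec p = l}. card (assigned_p (join_better spref M M') p))"
    using load_eq_sum[OF join_better_subset_single_valued] .
  also have "\<dots> \<le> (\<Sum>p\<in>{p\<in>P. lec p = l}. card (assigned_p M p))"
    using assms card_assigned_p_join_better_le unfolding upgrade_to_undersubscribed_def
    by (intro sum_mono) blast
  also have "\<dots> = card (assigned_l lec M l)"
    using load_eq_sum[OF M_subset_single_valued] ..
  finally show ?thesis .
qed

lemma load_join_better_le:
  assumes "l \<in> L"
  shows "card (assigned_l lec (join_better spref M M') l) \<le> card (assigned_l lec M l)"
proof (cases "upgrade_to_undersubscribed M M' l")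
  case True
  interpret swapped: stable_pair S P L spref lec lpref cp cl M' M
    by (rule stable_pair_swap)
  have "\<not> upgrade_to_undersubscribed M' M l"
    using True not_upgrade_to_undersubscribed_both by blast
  then have "card (assigned_l lec (join_better spref M M') l) \<le> card (assigned_l lec M' l)"
    using swapped.load_join_better_le_if_no_upgrade_to_undersubscribed
    by (simp add: join_better_commute)
  also have "\<dots> \<le> cl l"
    using matching_capacities(2)[OF matching_M' assms] .
  also have "\<dots> = card (assigned_l lec M l)"
    using True by (elim upgrade_to_undersubscribedE) simp
  finally show ?thesis .
qed (rule load_join_better_le_if_no_upgrade_to_undersubscribed)

lemma Domain_join_better_eq: "Domain (join_better spref M M') = Domain M"
proof (rule card_seteq[symmetric])
  show "finite (Domain (join_better spref M M'))"
    using finite_if_subset_S_P[OF join_better_subset_single_valued(1)] by (rule finite_Domain)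
  show "Domain M \<subseteq> Domain (join_better spref M M')"
    using Domain_join_better[OF matching_M matching_M'] by blast
  have "card (Domain (join_better spref M M')) =
      (\<Sum>l\<in>L. card (assigned_l lec (join_better spref M M') l))"
    using sum_loads_eq_card_Domain[OF join_better_subset_single_valued] ..
  also have "\<dots> \<le> (\<Sum>l\<in>L. card (assigned_l lec M l))"
    using load_join_better_le by (rule sum_mono)
  also have "\<dots> = card (Domain M)"
    using sum_loads_eq_card_Domain[OF M_subset_single_valued] .
  finally show "card (Domain (join_better spref M M')) \<le> card (Domain M)" .
qed

lemma Domain_eq: "Domain M' = Domain M"
proof -
  interpret swapped: stable_pair S P L spref lec lpref cp cl M' M
    by (rule stable_pair_swap)
  show ?thesis
    using Domain_join_better_eq swapped.Domain_join_better_eq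
    by (simp add: join_better_commute)
qed

lemma load_join_better:
  assumes "l \<in> L"
  shows "card (assigned_l lec (join_better spref M M') l) = card (assigned_l lec M l)"
proof (rule sum_mono_inv[OF _ load_join_better_le assms finite_L])
  show "(\<Sum>l\<in>L. card (assigned_l lec (join_better spref M M') l)) =
      (\<Sum>l\<in>L. card (assigned_l lec M l))"
    using sum_loads_eq_card_Domain[OF join_better_subset_single_valued]
      sum_loads_eq_card_Domain[OF M_subset_single_valued]
      Domain_join_better_eq
    by simp
qed

lemma load_eq:
  assumes "l \<in> L"
  shows "card (assigned_l lec M' l) = card (assigned_l lec M l)"
proof -
  interpret swapped: stable_pair S P L spref lec lpref cp cl M' M
    by (rule stable_pair_swap)
  show ?thesis
    using load_join_better[OF assms] swapped.load_join_better[OF assms]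
    by (simp add: join_better_commute)
qed

lemma card_upgrades_to_eq:
  assumes "p \<in> P" "\<not> upgrade_to_undersubscribed M M' (lec p)"
  shows "card (upgrades_to M M' p) = card (upgrades_from M M' p)"
proof -
  let ?K = "join_better spref M M'" and ?Q = "{q\<in>P. lec q = lec p}"
  have "(\<Sum>q\<in>?Q. card (assigned_p ?K q)) = (\<Sum>q\<in>?Q. card (assigned_p M q))"
    using load_join_better[OF lec_in_L[OF assms(1)]]
      load_eq_sum[OF join_better_subset_single_valued, of "lec p"]
      load_eq_sum[OF M_subset_single_valued, of "lec p"]
    by simp
  moreover have "card (assigned_p ?K q) \<le> card (assigned_p M q)" if "q \<in> ?Q" for q
    using that assms(2) unfolding upgrade_to_undersubscribed_def
    by (intro card_assigned_p_join_better_le) auto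
  ultimately have "card (assigned_p ?K p) = card (assigned_p M p)"
    by (rule sum_mono_inv) (use assms(1) finite_P in auto)
  then show ?thesis
    using card_assigned_p_join_better[OF matching_M matching_M', of p]
      card_assigned_p_decomp[OF matching_M matching_M', of p]
    by simp
qed

lemma card_assigned_p_join_worse_eq:
  assumes "p \<in> P" "\<not> upgrade_to_undersubscribed M' M (lec p)"
  shows "card (assigned_p (join_worse spref M M') p) = card (assigned_p M p)"
proof -
  interpret swapped: stable_pair S P L spref lec lpref cp cl M' M
    by (rule stable_pair_swap)
  show ?thesis
    using swapped.card_upgrades_to_eq[OF assms]
      card_assigned_p_join_worse[OF matching_M matching_M', of p]
      card_assigned_p_decomp[OF matching_M matching_M', of p]
    by simp
qed

lemma assigned_p_join_worse_cases_if_no_upgrade_to: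
  assumes "p \<in> P" "upgrades_to M' M p = {}"
  shows "assigned_p (join_worse spref M M') p = assigned_p M p \<or>
    assigned_p (join_worse spref M M') p = assigned_p M' p"
proof (cases "upgrades_from M' M p = {}")
  case True
  then show ?thesis
    using assms(2) assigned_p_join_worse[OF matching_M matching_M', of p]
      assigned_p_decomp[OF matching_M matching_M', of p]
    by simp
next
  case False
  interpret swapped: stable_pair S P L spref lec lpref cp cl M' M
    by (rule stable_pair_swap)
  have finite_from: "finite (upgrades_from M' M p)" "finite (upgrades_from M M' p)"
    using finite_subset[OF upgrades_from_subset finite_assigned(2)[OF matching_M']]
      finite_subset[OF upgrades_from_subset finite_assigned(2)[OF matching_M]] .
  have "upgrade_to_undersubscribed M' M (lec p)"
    using swapped.card_upgrades_to_eq[OF assms(1)] assms(2) False finite_from(1) by auto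
  then have no_room: "\<not> upgrade_to_undersubscribed M M' (lec p)"
    using not_upgrade_to_undersubscribed_both by blast
  have card_eq: "card (upgrades_to M M' p) = card (upgrades_from M M' p)"
    using card_upgrades_to_eq[OF assms(1) no_room] .
  have no_up: "upgrades_to M M' p = {}"
  proof (rule ccontr)
    assume "upgrades_to M M' p \<noteq> {}"
    then have full: "cp p \<le> card (assigned_p M p)"
      using no_room assms(1) unfolding upgrade_to_undersubscribed_def by auto
    have "card (assigned_p M p) < card (assigned_p M' p)"
      using card_assigned_p_decomp[OF matching_M matching_M', of p]
        card_assigned_p_decomp[OF matching_M' matching_M, of p]
        card_eq assms(2) False finite_from(1)
      by (simp add: Int_commute card_gt_0_iff)
    then show False
      using full matching_capacities(1)[OF matching_M' assms(1)] by linarith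
  qed
  then have "upgrades_from M M' p = {}"
    using card_eq finite_from(2) by simp
  then show ?thesis
    using no_up assigned_p_join_worse[OF matching_M matching_M', of p]
      assigned_p_decomp[OF matching_M' matching_M, of p]
    by (simp add: Int_commute)
qed

lemma assigned_p_join_worse_cases:
  assumes "p \<in> P"
  shows "assigned_p (join_worse spref M M') p = assigned_p M p \<or>
    assigned_p (join_worse spref M M') p = assigned_p M' p"
proof (cases "upgrades_to M' M p = {}")
  case True
  then show ?thesis
    using assigned_p_join_worse_cases_if_no_upgrade_to[OF assms] by blast
next
  case False
  interpret swapped: stable_pair S P L spref lec lpref cp cl M' M
    by (rule stable_pair_swap)
  have "upgrades_to M M' p = {}"
    using False upgrades_to_exclusive by blast
  then show ?thesis
    using swapped.assigned_p_join_worse_cases_if_no_upgrade_to[OF assms]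
    by (auto simp: join_worse_commute)
qed

lemma ex_upgrade_to_below:
  assumes "p \<in> P" "\<not> upgrade_to_undersubscribed M M' (lec p)" "s \<in> upgrades_from M M' p"
  shows "\<exists>a\<in>upgrades_to M M' p. prefers (lpref (lec p)) s a"
proof -
  have "finite (upgrades_from M M' p)"
    using finite_subset[OF upgrades_from_subset finite_assigned(2)[OF matching_M]] .
  then have "card (upgrades_from M M' p) \<noteq> 0"
    using assms(3) by auto
  then have "upgrades_to M M' p \<noteq> {}"
    using card_upgrades_to_eq[OF assms(1,2)] by force
  then obtain a where a: "a \<in> upgrades_to M M' p"
    by blast
  have "s \<in> assigned_p M p"
    using assms(3) upgrades_from_subset[of M M' p] by blast
  then show ?thesis
    using a refuses_prefers[OF refuses_upgrade_to[OF a]] by blast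
qed

lemma ex_assigned_l_below_upgrades_from:
  assumes "w \<in> upgrades_from M' M q"
  shows "\<exists>b\<in>assigned_l lec M (lec q). prefers (lpref (lec q)) w b"
proof -
  interpret swapped: stable_pair S P L spref lec lpref cp cl M' M
    by (rule stable_pair_swap)
  have wM': "(w, q) \<in> M'"
    using assms unfolding upgrades_from_def by blast
  then have "q \<in> P" "w \<in> assigned_l lec M' (lec q)"
    using acceptableD(2) matching_acceptable[OF matching_M'] unfolding assigned_l_def by blast+
  show ?thesis
  proof (cases "upgrade_to_undersubscribed M' M (lec q)")
    case True
    then obtain b where "lec q \<in> L" "b \<in> assigned_l lec M (lec q)"
      "card (assigned_l lec M' (lec q)) = cl (lec q)"
      "\<forall>t\<in>assigned_l lec M' (lec q). prefers (lpref (lec q)) t b"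
      by (rule swapped.upgrade_to_undersubscribedE)
    then show ?thesis
      using \<open>w \<in> assigned_l lec M' (lec q)\<close> by blast
  next
    case False
    then obtain b where "b \<in> upgrades_to M' M q" "prefers (lpref (lec q)) w b"
      using swapped.ex_upgrade_to_below[OF \<open>q \<in> P\<close> False assms] by blast
    moreover have "upgrades_to M' M q \<subseteq> assigned_l lec M (lec q)"
      using upgrades_to_subset[of M' M q] assigned_p_subset_assigned_l[of M q] by blast
    ultimately show ?thesis
      by blast
  qed
qed

lemma load_join_worse_if_no_upgrade_to_undersubscribed:
  assumes "\<not> upgrade_to_undersubscribed M' M l"
  shows "card (assigned_l lec (join_worse spref M M') l) = card (assigned_l lec M l)"
proof -
  have "card (assigned_l lec (join_worse spref M M') l) =
      (\<Sum>p\<in>{p\<in>P. lec p = l}. card (assigned_p (join_worse spref M M') p))"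
    using load_eq_sum[OF join_worse_subset_single_valued] .
  also have "\<dots> = (\<Sum>p\<in>{p\<in>P. lec p = l}. card (assigned_p M p))"
    using assms card_assigned_p_join_worse_eq by (intro sum.cong) auto
  also have "\<dots> = card (assigned_l lec M l)"
    using load_eq_sum[OF M_subset_single_valued] ..
  finally show ?thesis .
qed

lemma load_join_worse:
  assumes "l \<in> L"
  shows "card (assigned_l lec (join_worse spref M M') l) = card (assigned_l lec M l)"
proof (cases "upgrade_to_undersubscribed M' M l")
  case True
  interpret swapped: stable_pair S P L spref lec lpref cp cl M' M
    by (rule stable_pair_swap)
  have "\<not> upgrade_to_undersubscribed M M' l"
    using True not_upgrade_to_undersubscribed_both by blast
  then show ?thesis
    using swapped.load_join_worse_if_no_upgrade_to_undersubscribed load_eq[OF assms]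
    by (simp add: join_worse_commute)
qed (rule load_join_worse_if_no_upgrade_to_undersubscribed)

lemma matching_join_worse: "is_matching (join_worse spref M M')"
  unfolding matching_def
proof (intro conjI)
  show "\<forall>(s, p)\<in>join_worse spref M M'. acceptable S spref lec lpref s p"
    using join_worse_subset[of spref M M'] matching_acceptable[OF matching_M]
      matching_acceptable[OF matching_M'] by blast
  show "\<forall>s p q. (s, p) \<in> join_worse spref M M' \<longrightarrow> (s, q) \<in> join_worse spref M M' \<longrightarrow> p = q"
    using join_worse_subset_single_valued(2) unfolding single_valued_def by blast
  show "\<forall>p\<in>P. card (assigned_p (join_worse spref M M') p) \<le> cp p"
    using assigned_p_join_worse_cases matching_capacities(1)[OF matching_M]
      matching_capacities(1)[OF matching_M'] by metis
  show "\<forall>l\<in>L. card (assigned_l lec (join_worse spref M M') l) \<le> cl l"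
    using load_join_worse matching_capacities(2)[OF matching_M] by simp
qed

lemma desires_join_worse:
  assumes "desires spref (join_worse spref M M') s p"
  shows "desires spref M s p \<or> desires spref M' s p"
proof -
  have "Domain (join_worse spref M M') = Domain M"
    using Domain_join_worse[OF matching_M matching_M' Domain_eq] .
  then have unassigned: "\<forall>q. (s, q) \<notin> M" if "\<forall>q. (s, q) \<notin> join_worse spref M M'"
    using that by blast
  have "desires spref N s p"
    if N: "is_matching N" and sq: "(s, q) \<in> N" and better: "prefers (spref s) p q" for N q
  proof -
    have "(s, p) \<notin> N"
    proof
      assume "(s, p) \<in> N"
      then have "p = q"
        using sq matching_single_valued[OF N] unfolding single_valued_def by blast
      then show False
        using better prefers_irrefl[OF matching_distinct_spref[OF N sq]] by blast
    qed
    then show ?thesis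
      using sq better unfolding desires_def by blast
  qed
  then show ?thesis
    using assms unassigned join_worse_subset[of spref M M'] matching_M matching_M'
    unfolding desires_def by blast
qed

lemma join_worse_lecturer_prefers:
  assumes "l \<in> L" "\<forall>t\<in>assigned_l lec M l. prefers (lpref l) t s"
  shows "\<forall>w\<in>assigned_l lec (join_worse spref M M') l. prefers (lpref l) w s"
proof
  fix w
  assume "w \<in> assigned_l lec (join_worse spref M M') l"
  then obtain q where wq: "(w, q) \<in> join_worse spref M M'" and l: "lec q = l"
    unfolding assigned_l_def by blast
  show "prefers (lpref l) w s"
  proof (cases "(w, q) \<in> M")
    case True
    then show ?thesis
      using l assms(2) unfolding assigned_l_def by blast
  next
    case False
    then have "w \<in> upgrades_from M' M q"
      using wq unfolding join_worse_def upgrades_from_def by blast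
    then obtain b where "b \<in> assigned_l lec M l" "prefers (lpref l) w b"
      using ex_assigned_l_below_upgrades_from l by blast
    then show ?thesis
      using prefers_trans[OF distinct_lpref[OF assms(1)]] assms(2) by blast
  qed
qed

lemma upgrades_to_nonempty_if_join_worse_eq:
  assumes "p \<in> P" "card (assigned_p M p) = cp p"
    and "assigned_p (join_worse spref M M') p = assigned_p M' p" "assigned_p M' p \<noteq> assigned_p M p"
  shows "upgrades_to M' M p \<noteq> {}"
proof
  assume "upgrades_to M' M p = {}"
  then have "assigned_p M p \<subseteq> assigned_p M' p"
    using assms(3) assigned_p_decomp[OF matching_M matching_M', of p]
      assigned_p_join_worse[OF matching_M matching_M', of p]
    by auto
  moreover have "card (assigned_p M' p) \<le> card (assigned_p M p)"
    using assms(2) matching_capacities(1)[OF matching_M' assms(1)] by simp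
  ultimately have "assigned_p M p = assigned_p M' p"
    using card_seteq[OF finite_assigned(2)[OF matching_M']] by blast
  then show False
    using assms(4) by simp
qed

lemma join_worse_project_prefers:
  assumes "p \<in> P" "card (assigned_p M p) = cp p"
    and "\<forall>t\<in>assigned_p M p. prefers (lpref (lec p)) t s"
  shows "\<forall>w\<in>assigned_p (join_worse spref M M') p. prefers (lpref (lec p)) w s"
proof
  interpret swapped: stable_pair S P L spref lec lpref cp cl M' M
    by (rule stable_pair_swap)
  fix w
  assume wJ: "w \<in> assigned_p (join_worse spref M M') p"
  show "prefers (lpref (lec p)) w s"
  proof (cases "w \<in> assigned_p M p")
    case True
    then show ?thesis
      using assms(3) by blast
  next
    case False
    then have J: "assigned_p (join_worse spref M M') p = assigned_p M' p"
      using assigned_p_join_worse_cases[OF assms(1)] wJ by auto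
    then obtain b where b: "b \<in> upgrades_to M' M p"
      using upgrades_to_nonempty_if_join_worse_eq[OF assms(1,2) J] False wJ by blast
    have "prefers (lpref (lec p)) w b"
      using refuses_prefers[OF swapped.refuses_upgrade_to[OF b]] wJ J by blast
    moreover have "prefers (lpref (lec p)) b s"
      using assms(3) b upgrades_to_subset[of M' M p] by blast
    ultimately show ?thesis
      by (rule prefers_trans[OF distinct_lpref[OF lec_in_L[OF assms(1)]]])
  qed
qed

lemma lecturer_full_in_M'_if_join_worse_undersubscribed:
  assumes "p \<in> P" "card (assigned_p M p) = cp p"
    and "\<forall>t\<in>assigned_p M p. prefers (lpref (lec p)) t s"
    and "card (assigned_p (join_worse spref M M') p) < cp p"
  shows "card (assigned_l lec M' (lec p)) = cl (lec p)"
    "\<forall>t\<in>assigned_l lec M' (lec p). prefers (lpref (lec p)) t s"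
proof -
  interpret swapped: stable_pair S P L spref lec lpref cp cl M' M
    by (rule stable_pair_swap)
  have "assigned_p (join_worse spref M M') p \<noteq> assigned_p M p"
    using assms(2,4) by auto
  then have J: "assigned_p (join_worse spref M M') p = assigned_p M' p"
    using assigned_p_join_worse_cases[OF assms(1)] by blast
  then have room: "card (assigned_p M' p) < cp p"
    using assms(4) by simp
  then have "assigned_p M' p \<noteq> assigned_p M p"
    using assms(2) by auto
  then obtain b where b: "b \<in> upgrades_to M' M p"
    using upgrades_to_nonempty_if_join_worse_eq[OF assms(1,2) J] by blast
  have below_b: "\<forall>t\<in>assigned_l lec M' (lec p). prefers (lpref (lec p)) t b"
    and "card (assigned_l lec M' (lec p)) = cl (lec p)"
    using swapped.refuses_upgrade_to[OF b] room unfolding refuses_def by auto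
  moreover have "prefers (lpref (lec p)) b s"
    using assms(3) b upgrades_to_subset[of M' M p] by blast
  ultimately show "card (assigned_l lec M' (lec p)) = cl (lec p)"
    "\<forall>t\<in>assigned_l lec M' (lec p). prefers (lpref (lec p)) t s"
    using ball_prefers_trans[OF distinct_lpref[OF lec_in_L[OF assms(1)]] below_b] by blast+
qed

lemma refuses_join_worse:
  assumes "acceptable S spref lec lpref s p" "desires spref M s p"
  shows "refuses (join_worse spref M M') s p"
proof -
  interpret swapped: stable_pair S P L spref lec lpref cp cl M' M
    by (rule stable_pair_swap)
  let ?J = "join_worse spref M M'" and ?l = "lec p"
  have p: "p \<in> P" "?l \<in> L"
    using acceptableD(2)[OF assms(1)] lec_in_L by blast+
  note lecturer_case = refuses_if_lecturer_full[OF matching_join_worse p(1)]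
  have "refuses M s p"
    using stable_refuses[OF stable_M assms] .
  then consider
      (project_full) "card (assigned_p M p) = cp p" "\<forall>t\<in>assigned_p M p. prefers (lpref ?l) t s"
    | (lecturer_full) "card (assigned_l lec M ?l) = cl ?l"
        "\<forall>t\<in>assigned_l lec M ?l. prefers (lpref ?l) t s"
    unfolding refuses_def by blast
  then show ?thesis
  proof cases
    case project_full
    show ?thesis
    proof (cases "card (assigned_p ?J p) = cp p")
      case True
      then show ?thesis
        using join_worse_project_prefers[OF p(1) project_full] unfolding refuses_def by blast
    next
      case False
      then have "card (assigned_p ?J p) < cp p"
        using matching_capacities(1)[OF matching_join_worse p(1)] by simp
      note M'_lecturer =
        lecturer_full_in_M'_if_join_worse_undersubscribed[OF p(1) project_full this]
      show ?thesis
        using lecturer_case M'_lecturer(1) load_join_worse[OF p(2)] load_eq[OF p(2)]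
          swapped.join_worse_lecturer_prefers[OF p(2) M'_lecturer(2)]
        by (simp add: join_worse_commute)
    qed
  next
    case lecturer_full
    then show ?thesis
      using lecturer_case load_join_worse[OF p(2)] join_worse_lecturer_prefers[OF p(2)] by simp
  qed
qed

lemma stable_join_worse: "is_stable (join_worse spref M M')"
proof -
  interpret swapped: stable_pair S P L spref lec lpref cp cl M' M
    by (rule stable_pair_swap)
  have "refuses (join_worse spref M M') s p"
    if acc: "acceptable S spref lec lpref s p"
      and "desires spref (join_worse spref M M') s p" for s p
  proof -
    have "desires spref M s p \<or> desires spref M' s p"
      using desires_join_worse \<open>desires spref (join_worse spref M M') s p\<close> .
    then show ?thesis
    proof
      assume "desires spref M s p"
      then show ?thesis
        by (rule refuses_join_worse[OF acc])
    next
      assume "desires spref M' s p"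
      then show ?thesis
        using swapped.refuses_join_worse[OF acc] by (simp add: join_worse_commute)
    qed
  qed
  then show ?thesis
    using matching_join_worse blocking_pair_iff[OF matching_join_worse]
    unfolding stable_def by blast
qed

end

theorem lemma12:
  assumes "spa_instance S P L spref lec lpref cp cl"
    and "stable S P L spref lec lpref cp cl M"
    and "stable S P L spref lec lpref cp cl M'"
  shows "stable S P L spref lec lpref cp cl (join_worse spref M M')"
proof -
  interpret stable_pair S P L spref lec lpref cp cl M M'
    using assms by (simp add: stable_pair_def stable_pair_axioms_def spa_def)
  show ?thesis
    by (rule stable_join_worse)
qed

end
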